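(* Let $(X,d)$ be a metric space and let $u,u_1,u_2,\ldots\in F_{USC}(X)$. If $H_{\rm end}(u_n,u)\to0$, then $H([u_n]_\alpha,[u]_\alpha)\to0$ for each $\alpha\in(0,1)\setminus P_0(u)$.
   Context: A fuzzy set on $X$ is a function $u:X\to[0,1]$, with $\alpha$-cuts $[u]_\alpha=\{x: u(x)\ge\alpha\}$ for $\alpha\in(0,1]$ and $[u]_0=\overline{\{u>0\}}$. $F_{USC}(X)$ is the set of fuzzy sets with all $\alpha$-cuts ($\alpha\in[0,1]$) non-empty and closed. For non-empty closed sets $U,V$ in a metric space $(Y,\rho)$, $H(U,V)=\max\{\sup_{a\in U}\inf_{b\in V}\rho(a,b),\sup_{b\in V}\inf_{a\in U}\rho(a,b)\}$. $X\times[0,1]$ is metrized by $\overline{d}((x,\alpha),(y,\beta))=d(x,y)+|\alpha-\beta|$, ${\rm end}\,u=\{(x,t)\in X\times[0,1]: u(x)\ge t\}$, $H_{\rm end}(u,v)=H({\rm end}\,u,{\rm end}\,v)$. $P_0(u)=\{\alpha\in(0,1): \lim_{\beta\to\alpha}H([u]_\beta,[u]_\alpha)\neq0\}$, i.e. the set of $\alpha\in(0,1)$ at which it is not the case that $H([u]_\beta,[u]_\alpha)\to0$ as $\beta\to\alpha$. *)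

theory Defs
  imports "HOL-Analysis.Analysis"
begin

definition hausdorff_with :: "('b \<Rightarrow> 'b \<Rightarrow> real) \<Rightarrow> 'b set \<Rightarrow> 'b set \<Rightarrow> ereal" where
  "hausdorff_with rho U V =
     max (SUP a\<in>U. INF b\<in>V. ereal (rho a b)) (SUP b\<in>V. INF a\<in>U. ereal (rho a b))"

definition hausdorff_H :: "'a::metric_space set \<Rightarrow> 'a set \<Rightarrow> ereal" where
  "hausdorff_H U V = hausdorff_with dist U V"

definition cut :: "('a::metric_space \<Rightarrow> real) \<Rightarrow> real \<Rightarrow> 'a set" where
  "cut u \<alpha> = (if \<alpha> = 0 then closure {x. u x > 0} else {x. u x \<ge> \<alpha>})"

definition FUSC :: "('a::metric_space \<Rightarrow> real) set" where
  "FUSC = {u. (\<forall>x. 0 \<le> u x \<and> u x \<le> 1) \<and>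
              (\<forall>\<alpha>\<in>{0..1}. cut u \<alpha> \<noteq> {} \<and> closed (cut u \<alpha>))}"

definition dbar :: "('a::metric_space \<times> real) \<Rightarrow> ('a \<times> real) \<Rightarrow> real" where
  "dbar p q = dist (fst p) (fst q) + \<bar>snd p - snd q\<bar>"

definition endo :: "('a::metric_space \<Rightarrow> real) \<Rightarrow> ('a \<times> real) set" where
  "endo u = {(x, t). t \<in> {0..1} \<and> u x \<ge> t}"

definition H_end :: "('a::metric_space \<Rightarrow> real) \<Rightarrow> ('a \<Rightarrow> real) \<Rightarrow> ereal" where
  "H_end u v = hausdorff_with dbar (endo u) (endo v)"

definition P0 :: "('a::metric_space \<Rightarrow> real) \<Rightarrow> real set" where
  "P0 u = {\<alpha>\<in>{0<..<1}. \<not> ((\<lambda>\<beta>. hausdorff_H (cut u \<beta>) (cut u \<alpha>)) \<longlongrightarrow> 0) (at \<alpha>)}"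

end

theory Submission
  imports Defs
begin

text \<open>If the endographs of \<open>v\<close> and \<open>u\<close> are \<open>\<delta>\<close>-close, every point of \<open>[v]_\<alpha>\<close> lies within
  \<open>\<delta>\<close> of \<open>[u]_(\<alpha>-\<delta>)\<close>, and every point of \<open>[u]_(\<alpha>+\<delta>)\<close> lies within \<open>\<delta>\<close> of \<open>[v]_\<alpha>\<close>.
  For \<open>\<alpha> \<notin> P0 u\<close> both cuts are Hausdorff-close to \<open>[u]_\<alpha>\<close> once \<open>\<delta>\<close> is small, so the
  triangle inequality bounds \<open>H([v]_\<alpha>, [u]_\<alpha>)\<close> by \<open>\<delta>\<close> plus that small error.\<close>

lemma hausdorff_with_commute:
  assumes "\<And>a b. rho a b = rho b a"
  shows "hausdorff_with rho U V = hausdorff_with rho V U"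
  unfolding hausdorff_with_def by (simp add: assms max.commute)

lemma hausdorff_H_commute: "hausdorff_H U V = hausdorff_H V U"
  unfolding hausdorff_H_def by (rule hausdorff_with_commute) (rule dist_commute)

lemma H_end_commute: "H_end u v = H_end v u"
  unfolding H_end_def by (rule hausdorff_with_commute) (simp add: dbar_def dist_commute abs_minus_commute)

lemma hausdorff_with_lessD:
  assumes "hausdorff_with rho U V < ereal e" and "a \<in> U"
  shows "\<exists>b\<in>V. rho a b < e"
proof -
  have "(INF b\<in>V. ereal (rho a b)) \<le> (SUP a\<in>U. INF b\<in>V. ereal (rho a b))"
    using assms(2) by (rule SUP_upper)
  also have "\<dots> < ereal e"
    using assms(1) unfolding hausdorff_with_def by simp
  finally show ?thesis by (auto simp: INF_less_iff)
qed

lemma hausdorff_with_leI: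
  assumes "\<And>a. a \<in> U \<Longrightarrow> \<exists>b\<in>V. rho a b \<le> e"
    and "\<And>b. b \<in> V \<Longrightarrow> \<exists>a\<in>U. rho a b \<le> e"
  shows "hausdorff_with rho U V \<le> ereal e"
  unfolding hausdorff_with_def
  using assms by (fastforce intro!: SUP_least intro: INF_lower2)

lemma hausdorff_with_nonneg:
  assumes "U \<noteq> {}" and "\<And>a b. 0 \<le> rho a b"
  shows "0 \<le> hausdorff_with rho U V"
proof -
  obtain a where "a \<in> U" using assms(1) by blast
  have "0 \<le> (INF b\<in>V. ereal (rho a b))"
    using assms(2) by (simp add: INF_greatest)
  also have "\<dots> \<le> (SUP a\<in>U. INF b\<in>V. ereal (rho a b))"
    using \<open>a \<in> U\<close> by (rule SUP_upper)
  finally show ?thesis unfolding hausdorff_with_def by (simp add: le_max_iff_disj)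
qed

lemma ereal_tendsto_zeroI:
  fixes f :: "'b \<Rightarrow> ereal"
  assumes "\<And>x. 0 \<le> f x" and "\<And>e. 0 < e \<Longrightarrow> eventually (\<lambda>x. f x \<le> ereal e) F"
  shows "(f \<longlongrightarrow> 0) F"
proof (rule order_tendstoI)
  fix l :: ereal assume "l < 0"
  then show "eventually (\<lambda>x. l < f x) F"
    using assms(1) by (simp add: less_le_trans)
next
  fix r :: ereal assume "0 < r"
  then obtain e where "0 < ereal e" "ereal e < r" using ereal_dense2 by blast
  then have "eventually (\<lambda>x. f x \<le> ereal e) F" using assms(2) by simp
  then show "eventually (\<lambda>x. f x < r) F"
    by eventually_elim (rule le_less_trans[OF _ \<open>ereal e < r\<close>])
qed

lemma H_end_less_imp_cut_near:
  assumes "H_end v u < ereal \<delta>" and "0 < \<delta>" "\<delta> < \<beta>" "\<beta> \<le> 1"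
    and "x \<in> cut v \<beta>"
  shows "\<exists>y\<in>cut u (\<beta> - \<delta>). dist x y < \<delta>"
proof -
  have "(x, \<beta>) \<in> endo v"
    using assms(2-5) by (simp add: cut_def endo_def)
  then obtain y t where yt: "(y, t) \<in> endo u" "dist x y + \<bar>\<beta> - t\<bar> < \<delta>"
    using hausdorff_with_lessD[OF assms(1)[unfolded H_end_def]] by (force simp: dbar_def)
  have "\<bar>\<beta> - t\<bar> < \<delta>" "dist x y < \<delta>"
    using yt(2) zero_le_dist[of x y] by linarith+
  moreover have "t \<le> u y"
    using yt(1) by (simp add: endo_def)
  ultimately have "y \<in> cut u (\<beta> - \<delta>)"
    using assms(3) by (auto simp: cut_def)
  with \<open>dist x y < \<delta>\<close> show ?thesis by blast
qed

lemma cut_hausdorff_le_of_H_end_less: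
  assumes "H_end v u < ereal \<delta>" and "0 < \<delta>" "\<delta> < \<alpha>" "\<alpha> + \<delta> \<le> 1"
    and lower: "hausdorff_H (cut u (\<alpha> - \<delta>)) (cut u \<alpha>) < ereal \<epsilon>"
    and upper: "hausdorff_H (cut u (\<alpha> + \<delta>)) (cut u \<alpha>) < ereal \<epsilon>"
  shows "hausdorff_H (cut v \<alpha>) (cut u \<alpha>) \<le> ereal (\<delta> + \<epsilon>)"
  unfolding hausdorff_H_def
proof (rule hausdorff_with_leI)
  fix x assume "x \<in> cut v \<alpha>"
  then obtain y where y: "y \<in> cut u (\<alpha> - \<delta>)" "dist x y < \<delta>"
    using H_end_less_imp_cut_near[OF assms(1-3)] assms(2,4) by auto
  then obtain z where "z \<in> cut u \<alpha>" "dist y z < \<epsilon>"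
    using hausdorff_with_lessD[OF lower[unfolded hausdorff_H_def]] by blast
  then show "\<exists>z\<in>cut u \<alpha>. dist x z \<le> \<delta> + \<epsilon>"
    using y dist_triangle[of x z y] by force
next
  fix y assume "y \<in> cut u \<alpha>"
  then obtain z where z: "z \<in> cut u (\<alpha> + \<delta>)" "dist y z < \<epsilon>"
    using hausdorff_with_lessD[OF upper[unfolded hausdorff_H_commute hausdorff_H_def]] by blast
  moreover have "H_end u v < ereal \<delta>"
    by (subst H_end_commute) (rule assms(1))
  ultimately obtain x where "x \<in> cut v \<alpha>" "dist z x < \<delta>"
    using H_end_less_imp_cut_near[of u v \<delta> "\<alpha> + \<delta>" z] assms(2-4) by auto
  then show "\<exists>x\<in>cut v \<alpha>. dist x y \<le> \<delta> + \<epsilon>"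
    using z dist_triangle[of x y z] by (force simp: dist_commute)
qed

theorem theorem4p5:
  fixes u :: "'a::metric_space \<Rightarrow> real" and us :: "nat \<Rightarrow> 'a \<Rightarrow> real" and \<alpha> :: real
  assumes "u \<in> FUSC" and "\<And>n. us n \<in> FUSC"
    and "(\<lambda>n. H_end (us n) u) \<longlonglongrightarrow> 0"
    and "\<alpha> \<in> {0<..<1}" and "\<alpha> \<notin> P0 u"
  shows "(\<lambda>n. hausdorff_H (cut (us n) \<alpha>) (cut u \<alpha>)) \<longlonglongrightarrow> 0"
proof (rule ereal_tendsto_zeroI)
  fix n
  have "cut (us n) \<alpha> \<noteq> {}" using assms(2,4) by (auto simp: FUSC_def)
  then show "0 \<le> hausdorff_H (cut (us n) \<alpha>) (cut u \<alpha>)"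
    unfolding hausdorff_H_def by (rule hausdorff_with_nonneg) simp
next
  fix e :: real assume "0 < e"
  have "((\<lambda>\<beta>. hausdorff_H (cut u \<beta>) (cut u \<alpha>)) \<longlongrightarrow> 0) (at \<alpha>)"
    using assms(4,5) by (simp add: P0_def)
  then have "eventually (\<lambda>\<beta>. hausdorff_H (cut u \<beta>) (cut u \<alpha>) < ereal (e/2)) (at \<alpha>)"
    using \<open>0 < e\<close> by (intro order_tendstoD(2)) auto
  then obtain d where "0 < d"
    and near: "\<And>\<beta>. \<beta> \<noteq> \<alpha> \<Longrightarrow> dist \<beta> \<alpha> < d \<Longrightarrow> hausdorff_H (cut u \<beta>) (cut u \<alpha>) < ereal (e/2)"
    unfolding eventually_at by auto
  define \<delta> where "\<delta> = Min {d/2, e/2, \<alpha>/2, 1 - \<alpha>}"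
  have \<delta>: "0 < \<delta>" "\<delta> < d" "\<delta> \<le> e/2" "\<delta> < \<alpha>" "\<alpha> + \<delta> \<le> 1"
    using \<open>0 < d\<close> \<open>0 < e\<close> assms(4) by (auto simp: \<delta>_def min_def)
  have "eventually (\<lambda>n. H_end (us n) u < ereal \<delta>) sequentially"
    using assms(3) \<delta>(1) by (intro order_tendstoD(2)) auto
  then show "eventually (\<lambda>n. hausdorff_H (cut (us n) \<alpha>) (cut u \<alpha>) \<le> ereal e) sequentially"
  proof eventually_elim
    case (elim n)
    have "hausdorff_H (cut (us n) \<alpha>) (cut u \<alpha>) \<le> ereal (\<delta> + e/2)"
      using cut_hausdorff_le_of_H_end_less[OF elim \<delta>(1,4,5)] near[of "\<alpha> - \<delta>"] near[of "\<alpha> + \<delta>"] \<delta>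
      by (simp add: dist_real_def)
    also have "\<dots> \<le> ereal e" using \<delta>(3) by simp
    finally show ?case .
  qed
qed

end
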